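(* For $K\ge0$ define $g_0,g_1:[0,1]\to\mathbb{R}$ by $$g_0(u)=\begin{cases}0,&u\in[0,\frac12],\\ (u-\frac12)(1-u)(u-\frac23),&u\in(\frac12,1],\end{cases}\qquad g_1(u)=\begin{cases}0,&u\in[0,\frac1{11}]\cup[\frac12,\frac23],\\ K\operatorname{dist}(u,\{\frac1{11},\frac12\}),&u\in(\frac1{11},\frac12),\\ (u-\frac12)(1-u)(u-\frac23),&u\in(\frac23,1].\end{cases}$$ There are $M>0$ and $a\in(0,\frac1{16})$ (independent of $K$) such that the following hold for solutions $u$ with values in $[0,1]$: (i) If $u_t=u_{xx}+g_0(u)$ on $(0,1)\times\mathbb{R}$ and $u(0,\cdot)\le\chi_{(-\infty,0]}+\frac58\chi_{(0,\infty)}$, then $u(1,\cdot)\le\chi_{(-\infty,M]}+(\frac58-2a)\chi_{(M,\infty)}$. (ii) For all $K\ge0$: if $u_t=u_{xx}+g_1(u)$ on $(1,4)\times\mathbb{R}$ and $u(1,\cdot)\le\chi_{(-\infty,M]}+(\frac58-2a)\chi_{(M,\infty)}$, then $u(4,\cdot)\le\chi_{(-\infty,2M]}+(\frac58-a)\chi_{(2M,\infty)}$. (iii) If $u_t=u_{xx}+g_0(u)$ on $(-1,2)\times\mathbb{R}$ and $u(-1,\cdot)\ge\frac4{11}\chi_{(-M,M)}$, then $\min\{u(0,\cdot),u(2,\cdot)\}\ge\frac3{11}\chi_{(-1,1)}$. (iv) For all large enough $K$: if $u_t=u_{xx}+g_1(u)$ on $(2,3)\times\mathbb{R}$ and $u(2,\cdot)\ge\frac2{11}\chi_{(-1,1)}$,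 then $u(3,\cdot)\ge\frac5{11}\chi_{(-4M,4M)}$.
   Context: $\chi_A$ denotes the indicator function of the set $A$. Solutions are classical solutions of the stated semilinear heat equations taking values in $[0,1]$ (the domain of $g_0,g_1$). *)

theory Defs
  imports "HOL-Analysis.Analysis"
begin

text \<open>The nonlinearities. Only their values on [0,1] matter (solutions take values in [0,1]).\<close>

definition g0 :: "real \<Rightarrow> real" where
  "g0 u = (if u \<le> 1/2 then 0 else (u - 1/2) * (1 - u) * (u - 2/3))"

definition g1 :: "real \<Rightarrow> real \<Rightarrow> real" where
  "g1 K u = (if u \<le> 1/11 then 0
             else if u < 1/2 then K * infdist u {1/11, 1/2}
             else if u \<le> 2/3 then 0
             else (u - 1/2) * (1 - u) * (u - 2/3))"

text \<open>Here u t x is the value at time t,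
  position x.\<close>

definition classical_sol :: "(real \<Rightarrow> real) \<Rightarrow> real \<Rightarrow> real \<Rightarrow> (real \<Rightarrow> real \<Rightarrow> real) \<Rightarrow> bool" where
  "classical_sol f t0 t1 u \<longleftrightarrow>
     continuous_on ({t0..t1} \<times> UNIV) (\<lambda>(t, x). u t x) \<and>
     (\<forall>t\<in>{t0..t1}. \<forall>x. u t x \<in> {0..1}) \<and>
     (\<exists>ut ux uxx :: real \<Rightarrow> real \<Rightarrow> real.
        continuous_on ({t0<..<t1} \<times> UNIV) (\<lambda>(t, x). ut t x) \<and>
        continuous_on ({t0<..<t1} \<times> UNIV) (\<lambda>(t, x). uxx t x) \<and>
        (\<forall>t\<in>{t0<..<t1}. \<forall>x.
           ((\<lambda>s. u s x) has_real_derivative ut t x) (at t) \<and>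
           ((\<lambda>y. u t y) has_real_derivative ux t x) (at x) \<and>
           ((\<lambda>y. ux t y) has_real_derivative uxx t x) (at x) \<and>
           ut t x = uxx t x + f (u t x)))"

end

theory Submission
  imports Defs
begin

text \<open>Each bound is a comparison with an explicit sub- or supersolution. The comparison principle
  is a weak maximum principle for bounded functions on the strip \<open>[t\<^sub>0, t\<^sub>1] \<times> \<real>\<close>: an exponential
  time weight turns the one-sided Lipschitz bound on the nonlinearity into strict dissipativity,
  and then a positive supremum cannot be attained. For (i) and (ii) an exponential front
  moving at speed 2 above a level near \<open>5/8\<close> is a supersolution; for (iii) a slowly sinking
  paraboloid stays in the region \<open>u \<le> 1/2\<close> where \<open>g\<^sub>0\<close> vanishes; for (iv) a plateau whose steep edge
  runs outward at speed about 80 is a subsolution once \<open>K\<close> is large.\<close>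

section \<open>Comparison principle\<close>

definition heat_derivs ::
  "real \<Rightarrow> real \<Rightarrow> (real \<Rightarrow> real \<Rightarrow> real) \<Rightarrow> (real \<Rightarrow> real \<Rightarrow> real) \<Rightarrow>
   (real \<Rightarrow> real \<Rightarrow> real) \<Rightarrow> (real \<Rightarrow> real \<Rightarrow> real) \<Rightarrow> bool" where
  "heat_derivs t0 t1 w wt wx wxx \<longleftrightarrow>
     (\<forall>t\<in>{t0<..<t1}. \<forall>x.
        ((\<lambda>s. w s x) has_real_derivative wt t x) (at t) \<and>
        ((\<lambda>y. w t y) has_real_derivative wx t x) (at x) \<and>
        ((\<lambda>y. wx t y) has_real_derivative wxx t x) (at x))"

lemma heat_derivs_diff:
  assumes "heat_derivs t0 t1 u ut ux uxx" and "heat_derivs t0 t1 v vt vx vxx"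
  shows "heat_derivs t0 t1 (\<lambda>t x. u t x - v t x) (\<lambda>t x. ut t x - vt t x)
           (\<lambda>t x. ux t x - vx t x) (\<lambda>t x. uxx t x - vxx t x)"
  using assms unfolding heat_derivs_def by (auto intro!: derivative_eq_intros)

lemma classical_solE:
  assumes "classical_sol f t0 t1 u"
  obtains ut ux uxx where "continuous_on ({t0..t1} \<times> UNIV) (\<lambda>(t, x). u t x)"
    and "\<And>t x. t \<in> {t0..t1} \<Longrightarrow> u t x \<in> {0..1}"
    and "heat_derivs t0 t1 u ut ux uxx"
    and "\<And>t x. t \<in> {t0<..<t1} \<Longrightarrow> ut t x = uxx t x + f (u t x)"
  using assms unfolding classical_sol_def heat_derivs_def by blast

lemma classical_sol_range: "classical_sol f t0 t1 u \<Longrightarrow> t \<in> {t0..t1} \<Longrightarrow> 0 \<le> u t x \<and> u t x \<le> 1"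
  unfolding classical_sol_def by auto

lemma deriv2_nonpos_at_max:
  fixes f f' :: "real \<Rightarrow> real"
  assumes f': "\<And>y. (f has_real_derivative f' y) (at y)"
    and f'': "(f' has_real_derivative D) (at x)"
    and max: "\<And>y. f y \<le> f x"
  shows "D \<le> 0"
proof (rule ccontr)
  assume "\<not> D \<le> 0"
  then obtain d where d: "d > 0" "\<And>h. h > 0 \<Longrightarrow> h < d \<Longrightarrow> f' x < f' (x + h)"
    using DERIV_pos_inc_right[OF f''] by force
  have "f' x = 0" using DERIV_local_max[OF f'[of x], of 1] max by auto
  obtain z where z: "x < z" "z < x + d/2" "f (x + d/2) - f x = (d/2) * f' z"
    using MVT2[of x "x + d/2" f f'] d f' by auto
  have "f' z > 0" using d(2)[of "z - x"] z \<open>f' x = 0\<close> by auto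
  with d(1) have "(d/2) * f' z > 0" by simp
  with z(3) have "f (x + d/2) > f x" by linarith
  with max show False by (meson not_le)
qed

lemma deriv_nonneg_at_left_max:
  fixes f :: "real \<Rightarrow> real"
  assumes "(f has_real_derivative D) (at s)" and "a < s"
    and max: "\<And>t. t \<in> {a..s} \<Longrightarrow> f t \<le> f s"
  shows "0 \<le> D"
proof (rule ccontr)
  assume "\<not> 0 \<le> D"
  then obtain d where d: "d > 0" "\<And>h. h > 0 \<Longrightarrow> h < d \<Longrightarrow> f s < f (s - h)"
    using DERIV_neg_dec_left[OF assms(1)] by force
  define h where "h = min (d/2) (s - a)"
  have "h > 0" "h < d" "s - h \<in> {a..s}" using d(1) \<open>a < s\<close> by (auto simp: h_def)
  thus False using d(2) max by (meson not_le)
qed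

lemma continuous_attains_max_on_strip:
  fixes \<phi> :: "real \<Rightarrow> real \<Rightarrow> real"
  assumes cont: "continuous_on ({a..b} \<times> UNIV) (\<lambda>(t, x). \<phi> t x)"
    and far: "\<And>t x. t \<in> {a..b} \<Longrightarrow> R \<le> \<bar>x\<bar> \<Longrightarrow> \<phi> t x < c"
    and big: "s \<in> {a..b}" "c \<le> \<phi> s y"
  obtains ts xs where "ts \<in> {a..b}" "\<And>t x. t \<in> {a..b} \<Longrightarrow> \<phi> t x \<le> \<phi> ts xs"
proof -
  define S where "S = {a..b} \<times> {-R..R}"
  have "\<bar>y\<bar> < R" using far[OF big(1), of y] big(2) by (meson leD not_le)
  hence "(s, y) \<in> S" using big(1) by (auto simp: S_def)
  moreover have "continuous_on S (\<lambda>p. \<phi> (fst p) (snd p))"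
    by (rule continuous_on_subset[OF cont[unfolded case_prod_beta']]) (auto simp: S_def)
  ultimately obtain p where p: "p \<in> S" "\<And>q. q \<in> S \<Longrightarrow> \<phi> (fst q) (snd q) \<le> \<phi> (fst p) (snd p)"
    using continuous_attains_sup[of S] by (force simp: S_def compact_Times)
  show thesis
  proof (rule that)
    show "fst p \<in> {a..b}" using p(1) by (auto simp: S_def)
    show "\<phi> t x \<le> \<phi> (fst p) (snd p)" if "t \<in> {a..b}" for t x
    proof (cases "R \<le> \<bar>x\<bar>")
      case True
      with far[OF that] far[OF big(1)] big(2) p(2)[of "(s, y)"] \<open>(s, y) \<in> S\<close> show ?thesis
        by force
    next
      case False
      hence "-R \<le> x" "x \<le> R" by arith+
      thus ?thesis using that p(2)[of "(t, x)"] by (auto simp: S_def)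
    qed
  qed
qed

lemma heat_derivs_at_max:
  assumes "heat_derivs t0 t1 \<phi> \<phi>t \<phi>x \<phi>xx" and "s \<in> {t0<..<t1}" and "a < s"
    and max: "\<And>t y. t \<in> {a..s} \<Longrightarrow> \<phi> t y \<le> \<phi> s x"
  shows "\<phi>xx s x \<le> 0" and "0 \<le> \<phi>t s x"
proof -
  have d: "((\<lambda>r. \<phi> r x) has_real_derivative \<phi>t s x) (at s)"
    "\<And>y. ((\<lambda>y. \<phi> s y) has_real_derivative \<phi>x s y) (at y)"
    "((\<lambda>y. \<phi>x s y) has_real_derivative \<phi>xx s x) (at x)"
    using assms(1,2) unfolding heat_derivs_def by blast+
  show "\<phi>xx s x \<le> 0"
    by (rule deriv2_nonpos_at_max[OF d(2,3)]) (use max \<open>a < s\<close> in auto)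
  show "0 \<le> \<phi>t s x"
    by (rule deriv_nonneg_at_left_max[OF d(1) \<open>a < s\<close>]) (use max in auto)
qed

lemma strict_heat_subsolution_nonpos:
  fixes w wt wx wxx :: "real \<Rightarrow> real \<Rightarrow> real"
  assumes cont: "continuous_on ({t0..t1} \<times> UNIV) (\<lambda>(t, x). w t x)"
    and bnd: "\<And>t x. t \<in> {t0..t1} \<Longrightarrow> w t x \<le> Bd"
    and init: "\<And>x. w t0 x \<le> 0"
    and der: "heat_derivs t0 t1 w wt wx wxx"
    and strict: "\<And>t x. t \<in> {t0<..<t1} \<Longrightarrow> w t x > 0 \<Longrightarrow> wt t x < wxx t x"
    and T: "T \<in> {t0<..<t1}"
  shows "w T x0 \<le> 0"
proof (rule ccontr)
  assume "\<not> w T x0 \<le> 0"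
  \<comment> \<open>The penalty makes the maximum over the unbounded strip attained; its heat operator is zero.\<close>
  define D where "D = x0\<^sup>2 + 2 * (T - t0)"
  define eps where "eps = w T x0 / (2 * (D + 1))"
  define \<phi> where "\<phi> t x = w t x - eps * (x\<^sup>2 + 2 * (t - t0))" for t x
  have "D \<ge> 0" using T by (simp add: D_def)
  with \<open>\<not> w T x0 \<le> 0\<close> have "eps > 0" "eps * D < w T x0"
    by (simp_all add: eps_def field_simps add_nonneg_pos)
  hence "\<phi> T x0 > 0" by (simp add: \<phi>_def D_def)
  define R where "R = max Bd 0 / eps + 1"
  have far: "\<phi> t x < 0" if "t \<in> {t0..T}" "R \<le> \<bar>x\<bar>" for t x
  proof -
    have "max Bd 0 / eps \<ge> 0" using \<open>eps > 0\<close> by simp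
    hence "1 \<le> \<bar>x\<bar>" "max Bd 0 / eps < \<bar>x\<bar>" using that(2) by (simp_all add: R_def)
    hence "max Bd 0 / eps < \<bar>x\<bar> * \<bar>x\<bar>" by (smt (verit) mult_le_cancel_left1)
    hence "Bd < eps * x\<^sup>2" using \<open>eps > 0\<close> by (simp add: field_simps power2_eq_square)
    moreover have "eps * (2 * (t - t0)) \<ge> 0" "w t x \<le> Bd" using that T \<open>eps > 0\<close> bnd by auto
    ultimately show ?thesis by (simp add: \<phi>_def algebra_simps)
  qed
  have "continuous_on ({t0..T} \<times> UNIV) (\<lambda>(t, x). w t x)"
    by (rule continuous_on_subset[OF cont]) (use T in auto)
  hence cont\<phi>: "continuous_on ({t0..T} \<times> UNIV) (\<lambda>(t, x). \<phi> t x)"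
    unfolding \<phi>_def case_prod_beta' by (intro continuous_intros) auto
  obtain ts xs where ts: "ts \<in> {t0..T}" and max: "\<And>t x. t \<in> {t0..T} \<Longrightarrow> \<phi> t x \<le> \<phi> ts xs"
    using continuous_attains_max_on_strip[where s=T and y=x0, OF cont\<phi> far] \<open>\<phi> T x0 > 0\<close> T by auto
  have "\<phi> ts xs > 0" using max[of T x0] T \<open>\<phi> T x0 > 0\<close> by auto
  moreover have "\<phi> t0 xs \<le> 0"
    using init[of xs] \<open>eps > 0\<close> by (simp add: \<phi>_def order_trans[OF _ mult_nonneg_nonneg])
  ultimately have "t0 < ts" "ts \<in> {t0<..<t1}" using ts T by (auto simp: order_le_less)
  have "eps * (xs\<^sup>2 + 2 * (ts - t0)) \<ge> 0" using ts \<open>eps > 0\<close> by simp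
  hence "w ts xs > 0" using \<open>\<phi> ts xs > 0\<close> by (simp add: \<phi>_def)
  have "heat_derivs t0 t1 \<phi> (\<lambda>t x. wt t x - eps * 2) (\<lambda>t x. wx t x - eps * (2 * x))
          (\<lambda>t x. wxx t x - eps * 2)"
    using der unfolding heat_derivs_def \<phi>_def by (auto intro!: derivative_eq_intros)
  from heat_derivs_at_max[where x = xs, OF this \<open>ts \<in> {t0<..<t1}\<close> \<open>t0 < ts\<close>] max ts
  have "wxx ts xs \<le> wt ts xs" by auto
  with strict[OF \<open>ts \<in> {t0<..<t1}\<close> \<open>w ts xs > 0\<close>] show False by simp
qed

lemma nonpos_on_strip_if_nonpos_inside:
  fixes w :: "real \<Rightarrow> real \<Rightarrow> real"
  assumes cont: "continuous_on ({t0..t1} \<times> UNIV) (\<lambda>(t, x). w t x)"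
    and init: "\<And>x. w t0 x \<le> 0" and inside: "\<And>t x. t \<in> {t0<..<t1} \<Longrightarrow> w t x \<le> 0"
    and t: "t \<in> {t0..t1}"
  shows "w t x \<le> 0"
proof (cases "t = t0")
  case True
  with init show ?thesis by simp
next
  case False
  with t have "t0 < t1" "t \<in> closure {t0<..<t1}" by auto
  have "continuous_on {t0..t1} (\<lambda>t. (\<lambda>(t, x). w t x) (t, x))"
    by (rule continuous_on_compose2[OF cont]) (auto intro!: continuous_intros)
  with inside \<open>t0 < t1\<close> \<open>t \<in> closure _\<close> show ?thesis
    using continuous_le_on_closure[of "{t0<..<t1}" "\<lambda>t. w t x" t 0] by simp
qed

lemma parabolic_max_principle:
  fixes w wt wx wxx :: "real \<Rightarrow> real \<Rightarrow> real"
  assumes cont: "continuous_on ({t0..t1} \<times> UNIV) (\<lambda>(t, x). w t x)"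
    and bnd: "\<And>t x. t \<in> {t0..t1} \<Longrightarrow> w t x \<le> Bd"
    and init: "\<And>x. w t0 x \<le> 0"
    and der: "heat_derivs t0 t1 w wt wx wxx"
    and ineq: "\<And>t x. t \<in> {t0<..<t1} \<Longrightarrow> w t x > 0 \<Longrightarrow> wt t x \<le> wxx t x + L * w t x"
    and t: "t \<in> {t0..t1}"
  shows "w t x \<le> 0"
proof -
  define lam where "lam = \<bar>L\<bar> + 1"
  define e where "e t = exp (- lam * (t - t0))" for t
  have e: "0 < e t" "t \<in> {t0..t1} \<Longrightarrow> e t \<le> 1" for t
    by (auto simp: e_def lam_def mult_nonpos_nonneg)
  have interior: "e T * w T y \<le> 0" if "T \<in> {t0<..<t1}" for T y
  proof (rule strict_heat_subsolution_nonpos[where w = "\<lambda>t x. e t * w t x" and Bd = "max Bd 0",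
        OF _ _ _ _ _ that])
    show "continuous_on ({t0..t1} \<times> UNIV) (\<lambda>(t, x). e t * w t x)"
      using cont unfolding e_def case_prod_beta' by (intro continuous_intros) auto
    show "e t * w t x \<le> max Bd 0" if "t \<in> {t0..t1}" for t x
    proof -
      have "e t * w t x \<le> max (w t x) 0"
        using e[of t] that by (cases "w t x > 0") (auto simp: mult_le_cancel_right1 mult_nonneg_nonpos)
      with bnd[OF that, of x] show ?thesis by linarith
    qed
    show "heat_derivs t0 t1 (\<lambda>t x. e t * w t x) (\<lambda>t x. - lam * e t * w t x + e t * wt t x)
            (\<lambda>t x. e t * wx t x) (\<lambda>t x. e t * wxx t x)"
      using der unfolding heat_derivs_def e_def by (auto intro!: derivative_eq_intros)
    show "- lam * e t * w t x + e t * wt t x < e t * wxx t x"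
      if "t \<in> {t0<..<t1}" "e t * w t x > 0" for t x
    proof -
      have "w t x > 0" using that(2) e(1)[of t] by (simp add: zero_less_mult_iff)
      hence "L * w t x < lam * w t x" by (simp add: lam_def)
      with ineq[OF that(1) \<open>w t x > 0\<close>] have "wt t x < wxx t x + lam * w t x" by linarith
      from mult_strict_left_mono[OF this e(1)[of t]] show ?thesis by (simp add: algebra_simps)
    qed
    show "e t0 * w t0 x \<le> 0" for x
      using init[of x] e(1)[of t0] by (simp add: mult_nonneg_nonpos)
  qed
  show ?thesis
  proof (rule nonpos_on_strip_if_nonpos_inside[OF cont init _ t])
    show "w T y \<le> 0" if "T \<in> {t0<..<t1}" for T y
      using interior[OF that, of y] e(1)[of T] by (simp add: mult_le_0_iff)
  qed
qed

lemma supersolution_ge_classical_sol: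
  assumes sol: "classical_sol f t0 t1 u"
    and cont: "continuous_on ({t0..t1} \<times> UNIV) (\<lambda>(t, x). v t x)"
    and bnd: "\<And>t x. t \<in> {t0..t1} \<Longrightarrow> Bv \<le> v t x"
    and der: "heat_derivs t0 t1 v vt vx vxx"
    and init: "\<And>x. u t0 x \<le> v t0 x"
    and super: "\<And>t x r. t \<in> {t0<..<t1} \<Longrightarrow> r \<in> {0..1} \<Longrightarrow> v t x < r \<Longrightarrow>
                  f r \<le> vt t x - vxx t x + L * (r - v t x)"
    and t: "t \<in> {t0..t1}"
  shows "u t x \<le> v t x"
proof -
  obtain ut ux uxx where ucont: "continuous_on ({t0..t1} \<times> UNIV) (\<lambda>(t, x). u t x)"
    and urange: "\<And>t x. t \<in> {t0..t1} \<Longrightarrow> u t x \<in> {0..1}"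
    and uder: "heat_derivs t0 t1 u ut ux uxx"
    and ueq: "\<And>t x. t \<in> {t0<..<t1} \<Longrightarrow> ut t x = uxx t x + f (u t x)"
    using classical_solE[OF sol] by blast
  have "u t x - v t x \<le> 0"
  proof (rule parabolic_max_principle[where w = "\<lambda>t x. u t x - v t x",
        OF _ _ _ heat_derivs_diff[OF uder der] _ t])
    show "continuous_on ({t0..t1} \<times> UNIV) (\<lambda>(t, x). u t x - v t x)"
      using continuous_on_diff[OF ucont cont] by (simp add: case_prod_beta')
    show "u t x - v t x \<le> 1 - Bv" if "t \<in> {t0..t1}" for t x
      using urange[OF that, of x] bnd[OF that, of x] by simp
    show "u t0 x - v t0 x \<le> 0" for x
      using init[of x] by simp
    show "ut t x - vt t x \<le> uxx t x - vxx t x + L * (u t x - v t x)"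
      if "t \<in> {t0<..<t1}" "u t x - v t x > 0" for t x
    proof -
      have "u t x \<in> {0..1}" using urange[of t x] that(1) by simp
      with super[of t "u t x" x, OF that(1) this] ueq[OF that(1), of x] that(2) show ?thesis by simp
    qed
  qed
  thus ?thesis by simp
qed

lemma classical_sol_reflect:
  assumes "classical_sol f t0 t1 u"
  shows "classical_sol (\<lambda>r. - f (1 - r)) t0 t1 (\<lambda>t x. 1 - u t x)"
proof -
  from assms obtain ut ux uxx where
    "continuous_on ({t0..t1} \<times> UNIV) (\<lambda>(t, x). u t x)" "\<forall>t\<in>{t0..t1}. \<forall>x. u t x \<in> {0..1}"
    "continuous_on ({t0<..<t1} \<times> UNIV) (\<lambda>(t, x). ut t x)"
    "continuous_on ({t0<..<t1} \<times> UNIV) (\<lambda>(t, x). uxx t x)"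
    "\<forall>t\<in>{t0<..<t1}. \<forall>x.
       ((\<lambda>s. u s x) has_real_derivative ut t x) (at t) \<and>
       ((\<lambda>y. u t y) has_real_derivative ux t x) (at x) \<and>
       ((\<lambda>y. ux t y) has_real_derivative uxx t x) (at x) \<and> ut t x = uxx t x + f (u t x)"
    unfolding classical_sol_def by blast
  thus ?thesis
    unfolding classical_sol_def case_prod_beta'
    by (intro conjI exI[of _ "\<lambda>t x. - ut t x"] exI[of _ "\<lambda>t x. - ux t x"] exI[of _ "\<lambda>t x. - uxx t x"])
      (auto intro!: continuous_intros derivative_eq_intros)
qed

lemma subsolution_le_classical_sol:
  assumes sol: "classical_sol f t0 t1 u"
    and cont: "continuous_on ({t0..t1} \<times> UNIV) (\<lambda>(t, x). v t x)"
    and bnd: "\<And>t x. t \<in> {t0..t1} \<Longrightarrow> v t x \<le> Bv"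
    and der: "heat_derivs t0 t1 v vt vx vxx"
    and init: "\<And>x. v t0 x \<le> u t0 x"
    and sub: "\<And>t x r. t \<in> {t0<..<t1} \<Longrightarrow> r \<in> {0..1} \<Longrightarrow> r < v t x \<Longrightarrow>
                vt t x - vxx t x - f r \<le> L * (v t x - r)"
    and t: "t \<in> {t0..t1}"
  shows "v t x \<le> u t x"
proof -
  have "1 - u t x \<le> 1 - v t x"
  proof (rule supersolution_ge_classical_sol[OF classical_sol_reflect[OF sol], where
        v = "\<lambda>t x. 1 - v t x" and Bv = "1 - Bv" and L = L, OF _ _ _ _ _ t])
    show "continuous_on ({t0..t1} \<times> UNIV) (\<lambda>(t, x). 1 - v t x)"
      using cont unfolding case_prod_beta' by (intro continuous_intros)
    show "heat_derivs t0 t1 (\<lambda>t x. 1 - v t x) (\<lambda>t x. - vt t x) (\<lambda>t x. - vx t x) (\<lambda>t x. - vxx t x)"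
      using der unfolding heat_derivs_def by (auto intro!: derivative_eq_intros)
    show "- f (1 - r) \<le> - vt t x - - vxx t x + L * (r - (1 - v t x))"
      if "t \<in> {t0<..<t1}" "r \<in> {0..1}" "1 - v t x < r" for t x r
      using sub[of t "1 - r" x] that by (simp add: algebra_simps)
  qed (use bnd init in auto)
  thus ?thesis by simp
qed

section \<open>The nonlinearities\<close>

definition cubic :: "real \<Rightarrow> real" where "cubic u = (u - 1/2) * (1 - u) * (u - 2/3)"

lemma cubic_diff_le:
  assumes "0 \<le> v" "v \<le> r" "r \<le> 1"
  shows "cubic r - cubic v \<le> 5 * (r - v)"
proof -
  have eq: "cubic r - cubic v = (r - v) * (-(r\<^sup>2 + r * v + v\<^sup>2) + 13/6 * (r + v) - 3/2)"
    unfolding cubic_def power2_eq_square by algebra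
  have le: "-(r\<^sup>2 + r * v + v\<^sup>2) + 13/6 * (r + v) - 3/2 \<le> 5"
  proof -
    have "0 \<le> r\<^sup>2 + r * v + v\<^sup>2" using assms by simp
    moreover have "13/6 * (r + v) \<le> 13/3" using assms by simp
    ultimately show ?thesis by linarith
  qed
  from mult_left_mono[OF le, of "r - v"] assms show ?thesis by (simp add: eq mult.commute)
qed

lemma cubic_le:
  assumes "1/2 \<le> u" "u \<le> 1"
  shows "cubic u \<le> 1/72"
proof (cases "u \<ge> 2/3")
  case True
  have "(1 - u) * (u - 2/3) = 1/36 - ((1 - u) - (u - 2/3))\<^sup>2 / 4"
    by (simp add: power2_eq_square field_simps)
  hence "(1 - u) * (u - 2/3) \<le> 1/36" by simp
  moreover have "(1 - u) * (u - 2/3) \<ge> 0" using True assms by simp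
  ultimately have "(u - 1/2) * ((1 - u) * (u - 2/3)) \<le> (1/2) * (1/36)"
    using assms by (intro mult_mono) auto
  thus ?thesis by (simp add: cubic_def mult.assoc)
next
  case False
  with assms have "cubic u \<le> 0" unfolding cubic_def by (simp add: mult_nonneg_nonpos)
  thus ?thesis by simp
qed

lemma cubic_neg_near_5_8:
  assumes "5/8 - 1/1000 \<le> u" "u \<le> 5/8 + 1/64"
  shows "cubic u \<le> - 1/1000"
proof -
  have "(u - 1/2) * (1 - u) \<ge> (124/1000) * (359/1000)"
    using assms by (intro mult_mono) auto
  moreover have "2/3 - u \<ge> 25/1000" using assms by simp
  ultimately have "(u - 1/2) * (1 - u) * (2/3 - u) \<ge> (124/1000) * (359/1000) * (25/1000)"
    using assms by (intro mult_mono) auto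
  thus ?thesis by (simp add: cubic_def algebra_simps)
qed

lemma g0_eq_cubic: "1/2 \<le> u \<Longrightarrow> g0 u = cubic u"
  by (cases "u = 1/2") (auto simp: g0_def cubic_def)

lemma g1_eq_max_cubic:
  assumes "1/2 \<le> u" "u \<le> 1"
  shows "g1 K u = max 0 (cubic u)"
proof -
  have "(u - 1/2) * (1 - u) \<ge> 0" using assms by simp
  thus ?thesis
    using assms by (cases "u \<le> 2/3") (auto simp: g1_def cubic_def mult_nonneg_nonpos)
qed

lemma g0_diff_le: "1/2 \<le> v \<Longrightarrow> v \<le> r \<Longrightarrow> r \<le> 1 \<Longrightarrow> g0 r - g0 v \<le> 5 * (r - v)"
  using cubic_diff_le[of v r] by (simp add: g0_eq_cubic)

lemma g1_diff_le: "1/2 \<le> v \<Longrightarrow> v \<le> r \<Longrightarrow> r \<le> 1 \<Longrightarrow> g1 K r - g1 K v \<le> 5 * (r - v)"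
  using cubic_diff_le[of v r] by (auto simp: g1_eq_max_cubic)

lemma infdist_doubleton: "infdist v {a, b} = min \<bar>v - a\<bar> \<bar>v - b\<bar>"
proof -
  have "{a, b} = {a} \<union> {b}" by auto
  thus ?thesis using infdist_Un_min[of "{a}" "{b}" v] by (simp add: dist_real_def)
qed

lemma g1_below_half: "u < 1/2 \<Longrightarrow> g1 K u = K * (if u \<le> 1/11 then 0 else min (u - 1/11) (1/2 - u))"
  by (auto simp: g1_def infdist_doubleton)

lemma g1_diff_le_below_half:
  assumes "K \<ge> 0" "0 \<le> r" "r \<le> v" "v < 1/2"
  shows "g1 K v - g1 K r \<le> K * (v - r)"
proof -
  have "(if v \<le> 1/11 then 0 else min (v - 1/11) (1/2 - v))
        - (if r \<le> 1/11 then 0 else min (r - 1/11) (1/2 - r)) \<le> v - r"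
    using assms by auto
  from mult_left_mono[OF this \<open>K \<ge> 0\<close>] assms show ?thesis
    by (simp add: g1_below_half right_diff_distrib)
qed

lemma g1_nonneg_below_half: "K \<ge> 0 \<Longrightarrow> u < 1/2 \<Longrightarrow> 0 \<le> g1 K u"
  by (simp add: g1_below_half)

lemma g1_ge_away_from_zeros:
  assumes "K \<ge> 0" "1/11 + 1/200 \<le> u" "u \<le> 1/2 - 1/200"
  shows "K / 200 \<le> g1 K u"
  using mult_left_mono[of "1/200" "min (u - 1/11) (1/2 - u)" K] assms by (simp add: g1_below_half)

section \<open>Comparison functions\<close>

lemma two_pow_le_exp: "2 ^ n \<le> exp (real n)"
proof -
  have "(2::real) ^ n \<le> exp 1 ^ n" using exp_ge_add_one_self[of 1] by (intro power_mono) auto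
  thus ?thesis by (simp add: exp_of_nat_mult[symmetric])
qed

lemma exp_neg_le_inverse_two_pow: "exp (- real n) \<le> 1 / 2 ^ n"
  using two_pow_le_exp[of n] by (simp add: exp_minus field_simps)

text \<open>The front \<open>exp (2 t - x)\<close> satisfies \<open>w\<^sub>t - w\<^sub>x\<^sub>x = w\<close>, which dominates the positive part of
  the nonlinearity; behind the front the level decays because \<open>g\<^sub>0 < 0\<close> near \<open>5/8\<close>.\<close>

lemma g0_upper_bound_step:
  assumes sol: "classical_sol g0 0 1 u"
    and init: "\<forall>x. u 0 x \<le> indicator {..0} x + 5/8 * indicator {0<..} x"
  shows "\<forall>x. u 1 x \<le> indicator {..20} x + (5/8 - 2 * (1/4000)) * indicator {20<..} x"
proof
  fix x
  define v where "v t x = 5/8 - t/1000 + 3/8 * exp (2*t - x)" for t x :: real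
  have "u 1 x \<le> v 1 x"
  proof (rule supersolution_ge_classical_sol[OF sol, where v = v and L = 5 and Bv = "5/8 - 1/1000"
        and vt = "\<lambda>t x. - 1/1000 + 3/4 * exp (2*t - x)" and vx = "\<lambda>t x. - (3/8 * exp (2*t - x))"
        and vxx = "\<lambda>t x. 3/8 * exp (2*t - x)"])
    show "continuous_on ({0..1} \<times> UNIV) (\<lambda>(t, x). v t x)"
      unfolding v_def by (auto simp: case_prod_beta' intro!: continuous_intros)
    show "5/8 - 1/1000 \<le> v t x" if "t \<in> {0..1}" for t x
    proof -
      have "0 < exp (2*t - x)" "t \<le> 1" using that by auto
      thus ?thesis unfolding v_def by linarith
    qed
    show "heat_derivs 0 1 v (\<lambda>t x. - 1/1000 + 3/4 * exp (2*t - x))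
            (\<lambda>t x. - (3/8 * exp (2*t - x))) (\<lambda>t x. 3/8 * exp (2*t - x))"
      unfolding heat_derivs_def v_def by (auto intro!: derivative_eq_intros)
    show "u 0 x \<le> v 0 x" for x
    proof (cases "x \<le> 0")
      case True
      hence "1 \<le> exp (- x)" by simp
      moreover have "v 0 x = 5/8 + 3/8 * exp (- x)" by (simp add: v_def)
      ultimately have "1 \<le> v 0 x" by linarith
      with classical_sol_range[OF sol, of 0 x] show ?thesis by simp
    next
      case False
      hence "u 0 x \<le> 5/8" using init[rule_format, of x] by simp
      moreover have "5/8 \<le> v 0 x" using exp_gt_zero[of "- x"] by (simp add: v_def)
      ultimately show ?thesis by simp
    qed
    show "g0 r \<le> - 1/1000 + 3/4 * exp (2*t - x) - 3/8 * exp (2*t - x) + 5 * (r - v t x)"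
      if "t \<in> {0<..<1}" "r \<in> {0..1}" "v t x < r" for t x r
    proof -
      define e where "e = 3/8 * exp (2*t - x)"
      have "e > 0" and v_eq: "v t x = 5/8 - t/1000 + e" by (simp_all add: e_def v_def)
      hence "5/8 - 1/1000 \<le> v t x" "v t x \<le> 1" using that by auto
      have "g0 (v t x) \<le> e - 1/1000"
      proof (cases "e \<ge> 1/64")
        case True
        with cubic_le[of "v t x"] \<open>v t x \<le> 1\<close> \<open>5/8 - 1/1000 \<le> v t x\<close> show ?thesis
          by (simp add: g0_eq_cubic)
      next
        case False
        with cubic_neg_near_5_8[of "v t x"] \<open>e > 0\<close> v_eq that(1) show ?thesis
          by (simp add: g0_eq_cubic)
      qed
      with g0_diff_le[of "v t x" r] that \<open>5/8 - 1/1000 \<le> v t x\<close> show ?thesis by (simp add: e_def)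
    qed
  qed auto
  show "u 1 x \<le> indicator {..20} x + (5/8 - 2 * (1/4000)) * indicator {20<..} x"
  proof (cases "x \<le> 20")
    case True
    with classical_sol_range[OF sol, of 1 x] show ?thesis by simp
  next
    case False
    hence "exp (2 - x) \<le> exp (- real 18)" by simp
    hence "exp (2 - x) \<le> 1 / 2 ^ 18" using exp_neg_le_inverse_two_pow[of 18] by linarith
    hence "v 1 x \<le> 5/8 - 2 * (1/4000)" by (simp add: v_def)
    with \<open>u 1 x \<le> v 1 x\<close> False show ?thesis by simp
  qed
qed

lemma g1_upper_bound_step:
  assumes sol: "classical_sol (g1 K) 1 4 u"
    and init: "\<forall>x. u 1 x \<le> indicator {..20} x + (5/8 - 2 * (1/4000)) * indicator {20<..} x"
  shows "\<forall>x. u 4 x \<le> indicator {..2 * 20} x + (5/8 - 1/4000) * indicator {2 * 20<..} x"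
proof
  fix x
  define c :: real where "c = 3/8 + 1/2000"
  define e where "e t x = c * exp (2 * (t - 1) - (x - 20))" for t x :: real
  define v where "v t x = 5/8 - 1/2000 + e t x" for t x
  have "e t x > 0" for t x by (simp add: e_def c_def)
  have "u 4 x \<le> v 4 x"
  proof (rule supersolution_ge_classical_sol[OF sol, where v = v and L = 5 and Bv = "5/8 - 1/2000"
        and vt = "\<lambda>t x. 2 * e t x" and vx = "\<lambda>t x. - e t x" and vxx = e])
    show "continuous_on ({1..4} \<times> UNIV) (\<lambda>(t, x). v t x)"
      unfolding v_def e_def by (auto simp: case_prod_beta' intro!: continuous_intros)
    show "5/8 - 1/2000 \<le> v t x" for t x
      using \<open>e t x > 0\<close> by (simp add: v_def)
    show "heat_derivs 1 4 v (\<lambda>t x. 2 * e t x) (\<lambda>t x. - e t x) e"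
      unfolding heat_derivs_def v_def e_def by (auto intro!: derivative_eq_intros)
    show "u 1 x \<le> v 1 x" for x
    proof (cases "x \<le> 20")
      case True
      hence "1 \<le> exp (20 - x)" by simp
      hence "c \<le> e 1 x" by (simp add: e_def c_def)
      hence "1 \<le> v 1 x" by (simp add: v_def c_def)
      with classical_sol_range[OF sol, of 1 x] show ?thesis by simp
    next
      case False
      with init[rule_format, of x] \<open>e 1 x > 0\<close> show ?thesis by (simp add: v_def)
    qed
    show "g1 K r \<le> 2 * e t x - e t x + 5 * (r - v t x)"
      if "t \<in> {1<..<4}" "r \<in> {0..1}" "v t x < r" for t x r
    proof -
      have "5/8 - 1/2000 \<le> v t x" "v t x \<le> 1" using \<open>e t x > 0\<close> that by (auto simp: v_def)
      have "g1 K (v t x) \<le> e t x"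
      proof (cases "v t x \<le> 2/3")
        case True
        with \<open>5/8 - 1/2000 \<le> v t x\<close> \<open>e t x > 0\<close> show ?thesis by (simp add: g1_def)
      next
        case False
        hence "1/24 \<le> e t x" by (simp add: v_def)
        with cubic_le[of "v t x"] \<open>v t x \<le> 1\<close> False \<open>e t x > 0\<close> show ?thesis
          by (simp add: g1_eq_max_cubic)
      qed
      with g1_diff_le[of "v t x" r K] that \<open>5/8 - 1/2000 \<le> v t x\<close> show ?thesis by simp
    qed
  qed auto
  show "u 4 x \<le> indicator {..2 * 20} x + (5/8 - 1/4000) * indicator {2 * 20<..} x"
  proof (cases "x \<le> 40")
    case True
    with classical_sol_range[OF sol, of 4 x] show ?thesis by simp
  next
    case False
    hence "exp (26 - x) \<le> exp (- real 14)" by simp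
    hence "exp (26 - x) \<le> 1 / 2 ^ 14" using exp_neg_le_inverse_two_pow[of 14] by linarith
    hence "v 4 x \<le> 5/8 - 1/4000" by (simp add: v_def e_def c_def)
    with \<open>u 4 x \<le> v 4 x\<close> False show ?thesis by simp
  qed
qed

lemma g0_lower_bound_persists:
  assumes sol: "classical_sol g0 (-1) 2 u"
    and init: "\<forall>x. 4/11 * indicator {-20<..<20} x \<le> u (-1) x"
  shows "\<forall>x. 3/11 * indicator {-1<..<1} x \<le> min (u 0 x) (u 2 x)"
proof
  fix x
  define v where "v t x = 4/11 - (x\<^sup>2 + 2 * (t + 1)) / 1100" for t x :: real
  have sub: "v t x \<le> u t x" if "t \<in> {-1..2}" for t
  proof (rule subsolution_le_classical_sol[OF sol, where v = v and L = 0 and Bv = "4/11"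
        and vt = "\<lambda>t x. - 2/1100" and vx = "\<lambda>t x. - 2 * x / 1100" and vxx = "\<lambda>t x. - 2/1100",
        OF _ _ _ _ _ that])
    show "continuous_on ({-1..2} \<times> UNIV) (\<lambda>(t, x). v t x)"
      unfolding v_def by (auto simp: case_prod_beta' intro!: continuous_intros)
    show "v t x \<le> 4/11" if "t \<in> {-1..2}" for t x
      using that by (simp add: v_def)
    show "heat_derivs (-1) 2 v (\<lambda>t x. - 2/1100) (\<lambda>t x. - 2 * x / 1100) (\<lambda>t x. - 2/1100)"
      unfolding heat_derivs_def v_def by (auto intro!: derivative_eq_intros)
    show "v (-1) x \<le> u (-1) x" for x
    proof (cases "\<bar>x\<bar> < 20")
      case True
      with init[rule_format, of x] have "4/11 \<le> u (-1) x" by (simp add: abs_less_iff)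
      moreover have "v (-1) x = 4/11 - x\<^sup>2 / 1100" by (simp add: v_def)
      ultimately show ?thesis using zero_le_power2[of x] by linarith
    next
      case False
      hence "20\<^sup>2 \<le> \<bar>x\<bar>\<^sup>2" by (intro power_mono) auto
      hence "v (-1) x \<le> 0" by (simp add: v_def)
      with classical_sol_range[OF sol, of "-1" x] show ?thesis by simp
    qed
    show "- 2/1100 - - 2/1100 - g0 r \<le> 0 * (v t x - r)"
      if "t \<in> {-1<..<2}" "r \<in> {0..1}" "r < v t x" for t x r
    proof -
      have "v t x \<le> 4/11" using that(1) by (simp add: v_def)
      with that(3) show ?thesis by (simp add: g0_def)
    qed
  qed
  show "3/11 * indicator {-1<..<1} x \<le> min (u 0 x) (u 2 x)"
  proof (cases "x \<in> {-1<..<1}")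
    case True
    hence "x\<^sup>2 < 1" by (simp add: abs_square_less_1 abs_less_iff)
    hence "3/11 \<le> v 0 x" "3/11 \<le> v 2 x" by (simp_all add: v_def)
    with sub[of 0] sub[of 2] True show ?thesis by simp
  next
    case False
    with classical_sol_range[OF sol, of 0 x] classical_sol_range[OF sol, of 2 x] show ?thesis
      by simp
  qed
qed

section \<open>An expanding plateau\<close>

text \<open>The subsolution for (iv) is \<open>B(t) (1 - exp (- W)) - 1/200\<close> with
  \<open>W = exp (- 1000 (soft_abs x - C(t)))\<close>, where \<open>soft_abs\<close> smooths \<open>\<bar>x\<bar>\<close> at the origin. During \<open>[2, 3]\<close>
  the height \<open>B\<close> grows from \<open>411/2200 < 2/11\<close> to \<open>49/100 > 5/11 + 1/200\<close> and the radius \<open>C\<close> from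
  about 1 to about 81. On the plateau the fast transport of the steep edge is paid for by the
  reaction term, which is at least \<open>K/200\<close> there; at the foot of the edge the concavity of the
  profile dominates.\<close>

definition soft_abs :: "real \<Rightarrow> real" where "soft_abs x = sqrt (x\<^sup>2 + 1/10000)"

lemma soft_abs_sq: "(soft_abs x)\<^sup>2 = x\<^sup>2 + 1/10000"
  unfolding soft_abs_def by (simp add: add_nonneg_pos)

lemma soft_abs_pos: "soft_abs x > 0"
  unfolding soft_abs_def by (simp add: add_nonneg_pos)

lemma soft_abs_has_derivative:
  "(soft_abs has_real_derivative x / soft_abs x) (at x)"
  unfolding soft_abs_def using add_nonneg_pos[OF zero_le_power2[of x], of "1/10000"]
  by (auto intro!: derivative_eq_intros simp: field_simps power2_eq_square)

definition soft_sign :: "real \<Rightarrow> real" where "soft_sign x = x / soft_abs x"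

lemma soft_sign_has_derivative: "(soft_sign has_real_derivative (1/10000) / soft_abs x ^ 3) (at x)"
proof -
  let ?R = "soft_abs x"
  have "?R > 0" by (rule soft_abs_pos)
  hence "(soft_sign has_real_derivative (1 * ?R - x * (x / ?R)) / (?R * ?R)) (at x)"
    unfolding soft_sign_def by (auto intro!: derivative_eq_intros soft_abs_has_derivative)
  moreover have "1 * ?R - x * (x / ?R) = (?R\<^sup>2 - x\<^sup>2) / ?R"
    using \<open>?R > 0\<close> by (simp add: field_simps power2_eq_square)
  ultimately show ?thesis using \<open>?R > 0\<close> by (simp add: soft_abs_sq power3_eq_cube mult.assoc)
qed

lemma soft_abs_ge: "\<bar>x\<bar> \<le> soft_abs x"
  unfolding soft_abs_def by (simp add: real_le_rsqrt)

lemma soft_abs_le: "soft_abs x \<le> \<bar>x\<bar> + 1/100"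
  unfolding soft_abs_def by (rule real_sqrt_le_iff[THEN iffD2, of _ "(\<bar>x\<bar> + 1/100)\<^sup>2", simplified])
    (simp add: power2_eq_square algebra_simps)

lemma soft_abs_ge_hundredth: "1/100 \<le> soft_abs x"
  unfolding soft_abs_def by (intro real_le_rsqrt) (simp add: power_divide)

lemma soft_sign_sq_le_one: "(soft_sign x)\<^sup>2 \<le> 1"
  using soft_abs_sq[of x] by (simp add: soft_sign_def power_divide divide_le_eq_1 add_nonneg_pos)

lemma soft_sign_sq_ge_half:
  assumes "1/50 \<le> soft_abs x"
  shows "1/2 \<le> (soft_sign x)\<^sup>2"
proof -
  have "(1/50)\<^sup>2 \<le> (soft_abs x)\<^sup>2" using assms by (intro power_mono) auto
  hence "(soft_abs x)\<^sup>2 / 2 \<le> x\<^sup>2" using soft_abs_sq[of x] by (simp add: power_divide)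
  thus ?thesis using soft_abs_pos[of x] by (simp add: soft_sign_def field_simps)
qed

definition plateau_radius :: "real \<Rightarrow> real" where
  "plateau_radius t = 497/500 + 80009/1000 * (t - 2)"

definition plateau_height :: "real \<Rightarrow> real" where
  "plateau_height t = 411/2200 + 667/2200 * (t - 2)"

definition plateau_weight :: "real \<Rightarrow> real \<Rightarrow> real" where
  "plateau_weight t x = exp (- (1000 * (soft_abs x - plateau_radius t)))"

definition expanding_plateau :: "real \<Rightarrow> real \<Rightarrow> real" where
  "expanding_plateau t x = plateau_height t * (1 - exp (- plateau_weight t x)) - 1/200"

definition expanding_plateau_dt :: "real \<Rightarrow> real \<Rightarrow> real" where
  "expanding_plateau_dt t x = 667/2200 * (1 - exp (- plateau_weight t x))
     + plateau_height t * exp (- plateau_weight t x) * plateau_weight t x * 80009"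

definition expanding_plateau_dx :: "real \<Rightarrow> real \<Rightarrow> real" where
  "expanding_plateau_dx t x =
     - (plateau_height t * exp (- plateau_weight t x) * plateau_weight t x * 1000 * soft_sign x)"

definition expanding_plateau_dxx :: "real \<Rightarrow> real \<Rightarrow> real" where
  "expanding_plateau_dxx t x = plateau_height t * exp (- plateau_weight t x) * plateau_weight t x *
     (1000000 * (soft_sign x)\<^sup>2 * (1 - plateau_weight t x) - (1/10) / soft_abs x ^ 3)"

lemma plateau_weight_pos: "0 < plateau_weight t x"
  by (simp add: plateau_weight_def)

lemma plateau_weight_dt: "((\<lambda>s. plateau_weight s x) has_real_derivative plateau_weight t x * 80009) (at t)"
  unfolding plateau_weight_def plateau_radius_def by (auto intro!: derivative_eq_intros simp: algebra_simps)

lemma plateau_weight_dx: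
  "((\<lambda>y. plateau_weight t y) has_real_derivative - (plateau_weight t x * 1000 * soft_sign x)) (at x)"
  unfolding plateau_weight_def soft_sign_def
  by (auto intro!: derivative_eq_intros soft_abs_has_derivative simp: algebra_simps)

lemma heat_derivs_expanding_plateau:
  "heat_derivs t0 t1 expanding_plateau expanding_plateau_dt expanding_plateau_dx expanding_plateau_dxx"
  unfolding heat_derivs_def
proof (intro ballI allI conjI)
  fix t x
  show "((\<lambda>s. expanding_plateau s x) has_real_derivative expanding_plateau_dt t x) (at t)"
    unfolding expanding_plateau_def expanding_plateau_dt_def plateau_height_def
    by (auto intro!: derivative_eq_intros plateau_weight_dt simp: field_simps)
  show "((\<lambda>y. expanding_plateau t y) has_real_derivative expanding_plateau_dx t x) (at x)"
    unfolding expanding_plateau_def expanding_plateau_dx_def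
    by (auto intro!: derivative_eq_intros plateau_weight_dx simp: algebra_simps)
  show "((\<lambda>y. expanding_plateau_dx t y) has_real_derivative expanding_plateau_dxx t x) (at x)"
    unfolding expanding_plateau_dx_def expanding_plateau_dxx_def
    by (auto intro!: derivative_eq_intros plateau_weight_dx soft_sign_has_derivative
        simp: field_simps power2_eq_square)
qed

lemma exp_neg_mul_le_one: "exp (- W) * W \<le> (1 :: real)"
proof -
  have "W \<le> exp W" using exp_ge_add_one_self[of W] by linarith
  thus ?thesis by (simp add: exp_minus field_simps)
qed

lemma exp_neg_mul_sq_le_four:
  fixes W :: real
  assumes "0 \<le> W"
  shows "exp (- W) * W * W \<le> 4"
proof -
  have "(1 + W/2) * (1 + W/2) \<le> exp (W/2) * exp (W/2)"
    using exp_ge_add_one_self[of "W/2"] assms by (intro mult_mono) auto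
  hence "W * W \<le> 4 * exp W" using assms by (simp add: field_simps flip: exp_add)
  thus ?thesis by (simp add: exp_minus field_simps)
qed

lemma exp_neg_four_fifths_lt: "exp (- (4/5)) < (189/411 :: real)"
proof -
  have "(26/25) ^ 20 \<le> exp (1/25 :: real) ^ 20"
    using exp_ge_add_one_self[of "1/25 :: real"] by (intro power_mono) auto
  also have "\<dots> = exp (4/5)" by (simp flip: exp_of_nat_mult)
  finally have "411/189 < exp (4/5 :: real)" by (simp add: power_divide)
  thus ?thesis by (simp add: exp_minus field_simps)
qed

lemma plateau_height_bounds: "t \<in> {2..3} \<Longrightarrow> 411/2200 \<le> plateau_height t \<and> plateau_height t \<le> 49/100"
  by (auto simp: plateau_height_def field_simps)

lemma expanding_plateau_le: "t \<in> {2..3} \<Longrightarrow> expanding_plateau t x \<le> 1/2 - 1/200"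
proof -
  assume "t \<in> {2..3}"
  hence "plateau_height t * (1 - exp (- plateau_weight t x)) \<le> 49/100 * 1"
    using plateau_height_bounds[of t] plateau_weight_pos[of t x] by (intro mult_mono) auto
  thus ?thesis by (simp add: expanding_plateau_def)
qed

lemma expanding_plateau_heat_operator:
  "expanding_plateau_dt t x - expanding_plateau_dxx t x =
     667/2200 * (1 - exp (- plateau_weight t x))
     + plateau_height t * (exp (- plateau_weight t x) * plateau_weight t x) * (80009 + (1/10) / soft_abs x ^ 3)
     - 1000000 * plateau_height t * (soft_sign x)\<^sup>2 * (exp (- plateau_weight t x) * plateau_weight t x)
         * (1 - plateau_weight t x)"
  unfolding expanding_plateau_dt_def expanding_plateau_dxx_def by (simp add: algebra_simps)

lemma expanding_plateau_heat_operator_le: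
  assumes "t \<in> {2..3}"
  shows "expanding_plateau_dt t x - expanding_plateau_dxx t x \<le> 3000000"
proof -
  define W where "W = plateau_weight t x"
  define FW where "FW = exp (- W) * W"
  define B where "B = plateau_height t"
  define R where "R = soft_abs x"
  have "0 < W" "0 \<le> FW" "FW \<le> 1" "FW * W \<le> 4"
    using plateau_weight_pos[of t x] exp_neg_mul_le_one[of W] exp_neg_mul_sq_le_four[of W]
    by (simp_all add: W_def FW_def)
  have "0 \<le> B" "B \<le> 1/2" using plateau_height_bounds[OF assms] by (simp_all add: B_def)
  have "(1/100) ^ 3 \<le> R ^ 3" using soft_abs_ge_hundredth[of x] by (intro power_mono) (simp_all add: R_def)
  hence "(1/10) / R ^ 3 \<le> 100000" using soft_abs_pos[of x] by (simp add: R_def field_simps)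
  hence "80009 + (1/10) / R ^ 3 \<le> 180009" by simp
  hence "B * FW * (80009 + (1/10) / R ^ 3) \<le> 1/2 * 1 * 180009"
    using \<open>0 \<le> B\<close> \<open>B \<le> 1/2\<close> \<open>0 \<le> FW\<close> \<open>FW \<le> 1\<close> R_def soft_abs_pos[of x]
    by (intro mult_mono) auto
  moreover have "- (1000000 * B * (soft_sign x)\<^sup>2 * FW * (1 - W)) \<le> 1000000 * B * (soft_sign x)\<^sup>2 * (FW * W)"
    using \<open>0 \<le> B\<close> \<open>0 \<le> FW\<close> by (simp add: algebra_simps)
  moreover have "1000000 * B * (soft_sign x)\<^sup>2 * (FW * W) \<le> 1000000 * (1/2) * 1 * 4"
    using \<open>0 \<le> B\<close> \<open>B \<le> 1/2\<close> \<open>FW * W \<le> 4\<close> \<open>0 \<le> FW\<close> \<open>0 < W\<close> soft_sign_sq_le_one[of x]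
    by (intro mult_mono) auto
  moreover have "667/2200 * (1 - exp (- W)) \<le> 667/2200 * 1" by (intro mult_left_mono) auto
  moreover have "expanding_plateau_dt t x - expanding_plateau_dxx t x = 667/2200 * (1 - exp (- W))
      + B * FW * (80009 + (1/10) / R ^ 3) - 1000000 * B * (soft_sign x)\<^sup>2 * FW * (1 - W)"
    unfolding W_def FW_def B_def R_def by (rule expanding_plateau_heat_operator)
  ultimately show ?thesis by linarith
qed

lemma expanding_plateau_heat_operator_nonpos:
  assumes "t \<in> {2..3}" and low: "expanding_plateau t x < 1/11 + 1/200"
  shows "expanding_plateau_dt t x - expanding_plateau_dxx t x \<le> 0"
proof -
  define W where "W = plateau_weight t x"
  define F where "F = exp (- W)"
  define B where "B = plateau_height t"
  define R where "R = soft_abs x"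
  have "0 < W" "0 < F" using plateau_weight_pos[of t x] by (simp_all add: W_def F_def)
  have B: "411/2200 \<le> B" "B \<le> 49/100" using plateau_height_bounds[OF assms(1)] by (simp_all add: B_def)
  have "411/2200 * (1 - F) \<le> B * (1 - F)"
    using B \<open>0 < W\<close> by (intro mult_right_mono) (auto simp: F_def)
  also have "B * (1 - F) < 111/1100" using low by (simp add: expanding_plateau_def B_def F_def W_def)
  finally have "189/411 < F" by simp
  with exp_neg_four_fifths_lt have "exp (- (4/5)) < exp (- W)" unfolding F_def by linarith
  hence "W < 4/5" by simp
  \<comment> \<open>Only near the edge of the plateau can its value be this low.\<close>
  have "plateau_radius t < R"
  proof (rule ccontr)
    assume "\<not> plateau_radius t < R"
    hence "1 \<le> W" unfolding W_def plateau_weight_def R_def by simp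
    with \<open>W < 4/5\<close> show False by simp
  qed
  moreover have "497/500 \<le> plateau_radius t" using assms(1) by (simp add: plateau_radius_def)
  ultimately have "1/2 < R" by simp
  hence "(1/2) ^ 3 \<le> R ^ 3" by (intro power_mono) auto
  hence "(1/10) / R ^ 3 \<le> 1" using \<open>1/2 < R\<close> by (simp add: field_simps)
  have "1/2 * (1/5) \<le> (soft_sign x)\<^sup>2 * (1 - W)"
    using soft_sign_sq_ge_half[of x] \<open>1/2 < R\<close> \<open>W < 4/5\<close> by (intro mult_mono) (auto simp: R_def)
  have "0 < B * (F * W)" using B \<open>0 < F\<close> \<open>0 < W\<close> by simp
  have "B * (F * W) * (80009 + (1/10) / R ^ 3) - 1000000 * B * (soft_sign x)\<^sup>2 * (F * W) * (1 - W)
          = B * (F * W) * (80009 + (1/10) / R ^ 3 - 1000000 * ((soft_sign x)\<^sup>2 * (1 - W)))"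
    by (simp add: algebra_simps)
  also have "\<dots> \<le> B * (F * W) * (- 19990)"
    using \<open>0 < B * (F * W)\<close> \<open>(1/10) / R ^ 3 \<le> 1\<close> \<open>1/2 * (1/5) \<le> _\<close>
    by (intro mult_left_mono) auto
  also have "\<dots> \<le> 411/2200 * (189/411 * W) * (- 19990)"
  proof -
    have "411/2200 * (189/411 * W) \<le> B * (F * W)"
      using B \<open>189/411 < F\<close> \<open>0 < W\<close> by (intro mult_mono) auto
    thus ?thesis by simp
  qed
  moreover have "667/2200 * (1 - F) \<le> 667/2200 * W"
    using exp_ge_add_one_self[of "- W"] by (simp add: F_def)
  moreover have "expanding_plateau_dt t x - expanding_plateau_dxx t x = 667/2200 * (1 - F)
      + B * (F * W) * (80009 + (1/10) / R ^ 3) - 1000000 * B * (soft_sign x)\<^sup>2 * (F * W) * (1 - W)"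
    unfolding W_def F_def B_def R_def by (rule expanding_plateau_heat_operator)
  ultimately show ?thesis using \<open>0 < W\<close> by linarith
qed

lemma expanding_plateau_subsolution:
  assumes K: "10^9 \<le> K" and t: "t \<in> {2..3}" and r: "0 \<le> r" "r < expanding_plateau t x"
  shows "expanding_plateau_dt t x - expanding_plateau_dxx t x - g1 K r \<le> K * (expanding_plateau t x - r)"
proof -
  let ?v = "expanding_plateau t x"
  have "?v < 1/2" using expanding_plateau_le[OF t, of x] by simp
  have "expanding_plateau_dt t x - expanding_plateau_dxx t x \<le> g1 K ?v"
  proof (cases "1/11 + 1/200 \<le> ?v")
    case True
    have "expanding_plateau_dt t x - expanding_plateau_dxx t x \<le> 3000000"
      by (rule expanding_plateau_heat_operator_le[OF t])
    also have "\<dots> \<le> K / 200" using K by simp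
    also have "\<dots> \<le> g1 K ?v"
      using K True expanding_plateau_le[OF t, of x] by (intro g1_ge_away_from_zeros) auto
    finally show ?thesis .
  next
    case False
    hence "expanding_plateau_dt t x - expanding_plateau_dxx t x \<le> 0"
      by (intro expanding_plateau_heat_operator_nonpos[OF t]) simp
    moreover have "0 \<le> g1 K ?v" using K \<open>?v < 1/2\<close> by (intro g1_nonneg_below_half) auto
    ultimately show ?thesis by linarith
  qed
  moreover have "g1 K ?v - g1 K r \<le> K * (?v - r)"
    using K r \<open>?v < 1/2\<close> by (intro g1_diff_le_below_half) auto
  ultimately show ?thesis by linarith
qed

lemma g1_lower_bound_spreads:
  assumes K: "10^9 \<le> K" and sol: "classical_sol (g1 K) 2 3 u"
    and init: "\<forall>x. 2/11 * indicator {-1<..<1} x \<le> u 2 x"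
  shows "\<forall>x. 5/11 * indicator {-4 * 20<..<4 * 20} x \<le> u 3 x"
proof
  fix x
  have sub: "expanding_plateau 3 x \<le> u 3 x"
  proof (rule subsolution_le_classical_sol[OF sol _ _ heat_derivs_expanding_plateau,
        where Bv = "1/2" and L = K])
    show "continuous_on ({2..3} \<times> UNIV) (\<lambda>(t, x). expanding_plateau t x)"
      unfolding expanding_plateau_def plateau_weight_def plateau_height_def plateau_radius_def soft_abs_def
      by (auto simp: case_prod_beta' intro!: continuous_intros)
    show "expanding_plateau t x \<le> 1/2" if "t \<in> {2..3}" for t x
      using expanding_plateau_le[OF that, of x] by simp
    show "expanding_plateau 2 x \<le> u 2 x" for x
    proof (cases "x \<in> {-1<..<1}")
      case True
      have "plateau_height 2 * (1 - exp (- plateau_weight 2 x)) \<le> plateau_height 2 * 1"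
        by (intro mult_left_mono) (auto simp: plateau_height_def)
      moreover have "plateau_height 2 = 411/2200" by (simp add: plateau_height_def)
      ultimately have "expanding_plateau 2 x \<le> 2/11" unfolding expanding_plateau_def by linarith
      with init[rule_format, of x] True show ?thesis by simp
    next
      case False
      hence "1 \<le> soft_abs x" using soft_abs_ge[of x] by auto
      hence "plateau_weight 2 x \<le> exp (- real 6)" by (simp add: plateau_weight_def plateau_radius_def)
      hence "plateau_weight 2 x \<le> 1/64" using exp_neg_le_inverse_two_pow[of 6] by simp
      moreover have "1 - exp (- plateau_weight 2 x) \<le> plateau_weight 2 x"
        using exp_ge_add_one_self[of "- plateau_weight 2 x"] by simp
      ultimately have "expanding_plateau 2 x \<le> 0" by (simp add: expanding_plateau_def plateau_height_def)
      with classical_sol_range[OF sol, of 2 x] show ?thesis by simp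
    qed
    show "expanding_plateau_dt t x - expanding_plateau_dxx t x - g1 K r \<le> K * (expanding_plateau t x - r)"
      if "t \<in> {2<..<3}" "r \<in> {0..1}" "r < expanding_plateau t x" for t x r
      using expanding_plateau_subsolution[OF K, of t r x] that by simp
  qed simp
  show "5/11 * indicator {-4 * 20<..<4 * 20} x \<le> u 3 x"
  proof (cases "x \<in> {-4 * 20<..<4 * 20}")
    case True
    hence "soft_abs x < 81" using soft_abs_le[of x] by auto
    hence "exp (real 3) \<le> plateau_weight 3 x" by (simp add: plateau_weight_def plateau_radius_def)
    hence "8 \<le> plateau_weight 3 x" using two_pow_le_exp[of 3] by simp
    hence "exp (- plateau_weight 3 x) \<le> exp (- real 8)" by simp
    from order_trans[OF this exp_neg_le_inverse_two_pow]
    have "exp (- plateau_weight 3 x) \<le> 1/256" by simp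
    moreover have "expanding_plateau 3 x = 49/100 * (1 - exp (- plateau_weight 3 x)) - 1/200"
      by (simp add: expanding_plateau_def plateau_height_def)
    ultimately have "5/11 \<le> expanding_plateau 3 x" by (simp add: field_simps)
    with sub True show ?thesis by simp
  next
    case False
    with classical_sol_range[OF sol, of 3 x] show ?thesis by simp
  qed
qed

theorem lemma7p1:
  shows "\<exists>M::real. M > 0 \<and> (\<exists>a::real. 0 < a \<and> a < 1/16 \<and>
    (\<forall>u. classical_sol g0 0 1 u \<longrightarrow>
       (\<forall>x. u 0 x \<le> indicator {..0} x + 5/8 * indicator {0<..} x) \<longrightarrow>
       (\<forall>x. u 1 x \<le> indicator {..M} x + (5/8 - 2*a) * indicator {M<..} x)) \<and>
    (\<forall>K::real. K \<ge> 0 \<longrightarrow> (\<forall>u. classical_sol (g1 K) 1 4 u \<longrightarrow>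
       (\<forall>x. u 1 x \<le> indicator {..M} x + (5/8 - 2*a) * indicator {M<..} x) \<longrightarrow>
       (\<forall>x. u 4 x \<le> indicator {..2*M} x + (5/8 - a) * indicator {2*M<..} x))) \<and>
    (\<forall>u. classical_sol g0 (-1) 2 u \<longrightarrow>
       (\<forall>x. u (-1) x \<ge> 4/11 * indicator {-M<..<M} x) \<longrightarrow>
       (\<forall>x. min (u 0 x) (u 2 x) \<ge> 3/11 * indicator {-1<..<1} x)) \<and>
    (\<exists>K0::real. \<forall>K\<ge>K0. \<forall>u. classical_sol (g1 K) 2 3 u \<longrightarrow>
       (\<forall>x. u 2 x \<ge> 2/11 * indicator {-1<..<1} x) \<longrightarrow>
       (\<forall>x. u 3 x \<ge> 5/11 * indicator {-4*M<..<4*M} x)))"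
proof -
  have "(0::real) < 20" "0 < (1/4000 :: real)" "1/4000 < (1/16 :: real)" by simp_all
  moreover have "\<exists>K0::real. \<forall>K\<ge>K0. \<forall>u. classical_sol (g1 K) 2 3 u \<longrightarrow>
       (\<forall>x. u 2 x \<ge> 2/11 * indicator {-1<..<1} x) \<longrightarrow>
       (\<forall>x. u 3 x \<ge> 5/11 * indicator {-4*20<..<4*20} x)"
    using g1_lower_bound_spreads by (intro exI[of _ "10^9"]) blast
  ultimately show ?thesis
    using g0_upper_bound_step g1_upper_bound_step g0_lower_bound_persists
    by (intro exI[of _ 20] conjI[OF _ exI[of _ "1/4000"]]) blast+
qed

end
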